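(* Let $k\in\{1,2,\dots\}\cup\{\infty\}$, $a,b>0$, $f\in D^k(\mathbb{R},0)$, $\tau_1=f'(0)$, and $q=w_b\circ f\circ w_a\in H^k(\mathbb{R},0)$. (a) If $\tau_1>0$, then $q$ is $C^1$ if and only if $a=1/b$. (b) If $\tau_1<0$, then $q$ is $C^1$ if and only if $a=b$. (c) Suppose $q$ is $C^1$, $a,b\neq1$, and $n$ is an integer with $2\le n\le k$. Then $q$ is $C^n$ if and only if $f''(0)=\cdots=f^{(n)}(0)=0$.
   Context: $H^k(\mathbb{R},0)$ is the group of homeomorphisms $h$ of $\mathbb{R}$ with $h(0)=0$ whose restriction to $\mathbb{R}\setminus\{0\}$ is a $C^k$-diffeomorphism of $\mathbb{R}\setminus\{0\}$; $D^k(\mathbb{R},0)$ is its subgroup of $C^k$-diffeomorphisms of $\mathbb{R}$. For $c>0$, $w_c\colon\mathbb{R}\to\mathbb{R}$ is $w_c(x)=x$ for $x\le0$ and $w_c(x)=cx$ for $x>0$. *)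

theory Defs
  imports "HOL-Analysis.Analysis" "HOL-Library.Extended_Nat"
begin

definition Cn_on :: "nat \<Rightarrow> real set \<Rightarrow> (real \<Rightarrow> real) \<Rightarrow> bool" where
  "Cn_on n S f \<longleftrightarrow>
     (\<forall>m<n. \<forall>x\<in>S. ((deriv ^^ m) f has_real_derivative (deriv ^^ Suc m) f x) (at x))
     \<and> continuous_on S ((deriv ^^ n) f)"

definition Ck_on :: "enat \<Rightarrow> real set \<Rightarrow> (real \<Rightarrow> real) \<Rightarrow> bool" where
  "Ck_on k S f \<longleftrightarrow> (\<forall>n::nat. enat n \<le> k \<longrightarrow> Cn_on n S f)"

definition Hk0 :: "enat \<Rightarrow> (real \<Rightarrow> real) set" where
  "Hk0 k = {h. h 0 = 0 \<and> (\<exists>g. homeomorphism UNIV UNIV h g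
              \<and> Ck_on k (- {0}) h \<and> Ck_on k (- {0}) g)}"

definition Dk0 :: "enat \<Rightarrow> (real \<Rightarrow> real) set" where
  "Dk0 k = {h. h 0 = 0 \<and> (\<exists>g. homeomorphism UNIV UNIV h g
              \<and> Ck_on k UNIV h \<and> Ck_on k UNIV g)}"

definition w :: "real \<Rightarrow> real \<Rightarrow> real" where
  "w c x = (if x \<le> 0 then x else c * x)"

end

theory Submission
  imports Defs
begin

(* Being a homeomorphism fixing 0, f is strictly monotone, so w_b \<circ> f \<circ> w_a coincides with
   c f(x) for x \<le> 0 and with d f(a x) for x > 0, where (c, d) = (1, b) if f'(0) > 0 and
   (c, d) = (b, 1) if f'(0) < 0.  Two C^n functions agreeing at 0 splice to a C^n function iff
   their derivatives up to order n agree at 0, here iff c f^(j)(0) = d a^j f^(j)(0) for j \<le> n.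
   As f'(0) \<noteq> 0, the case j = 1 says c = d a; given this, for j \<ge> 2 the condition reads
   a f^(j)(0) = a^j f^(j)(0), i.e. f^(j)(0) = 0 as soon as a \<noteq> 1. *)

definition splice :: "(real \<Rightarrow> real) \<Rightarrow> (real \<Rightarrow> real) \<Rightarrow> real \<Rightarrow> real" where
  "splice L R x = (if x \<le> 0 then L x else R x)"

lemma iterated_deriv_eq_derivative_chain:
  assumes "\<And>m x. m < n \<Longrightarrow> (D m has_real_derivative D (Suc m) x) (at x)" and "m \<le> n"
  shows "(deriv ^^ m) (D 0) = D m"
  using assms(2)
proof (induction m)
  case (Suc m)
  then have "(deriv ^^ Suc m) (D 0) = deriv (D m)" by simp
  also have "\<dots> = D (Suc m)"
    using assms(1) Suc.prems by (intro ext DERIV_imp_deriv) simp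
  finally show ?case .
qed simp

lemma Cn_on_UNIV_if_derivative_chain:
  assumes "\<And>m x. m < n \<Longrightarrow> (D m has_real_derivative D (Suc m) x) (at x)"
    and "continuous_on UNIV (D n)"
  shows "Cn_on n UNIV (D 0)"
proof -
  have eq: "(deriv ^^ m) (D 0) = D m" if "m \<le> n" for m
    using iterated_deriv_eq_derivative_chain[of n D m] assms(1) that by blast
  show ?thesis
    unfolding Cn_on_def
  proof (intro conjI ballI allI impI)
    fix m x
    assume "m < n"
    then show "((deriv ^^ m) (D 0) has_real_derivative (deriv ^^ Suc m) (D 0) x) (at x)"
      using assms(1) eq[of m] eq[of "Suc m"] by simp
  next
    show "continuous_on UNIV ((deriv ^^ n) (D 0))"
      using assms(2) eq[of n] by simp
  qed
qed

lemma Cn_on_UNIV_has_real_derivative: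
  assumes "Cn_on n UNIV f" "m < n"
  shows "((deriv ^^ m) f has_real_derivative (deriv ^^ Suc m) f x) (at x)"
  using assms unfolding Cn_on_def by blast

lemma
  assumes "Cn_on n UNIV f"
  shows Cn_on_UNIV_scaled: "Cn_on n UNIV (\<lambda>x. c * f (a * x))"
    and iterated_deriv_scaled:
      "m \<le> n \<Longrightarrow> (deriv ^^ m) (\<lambda>x. c * f (a * x)) = (\<lambda>x. c * a ^ m * (deriv ^^ m) f (a * x))"
proof -
  define D where "D m = (\<lambda>x. c * a ^ m * (deriv ^^ m) f (a * x))" for m
  have chain: "(D m has_real_derivative D (Suc m) x) (at x)" if "m < n" for m x
  proof -
    have "(D m has_real_derivative c * a ^ m * ((deriv ^^ Suc m) f (a * x) * a)) (at x)"
      unfolding D_def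
      by (rule DERIV_cmult[OF DERIV_chain2[OF Cn_on_UNIV_has_real_derivative[OF assms that]
            DERIV_cmult_Id]])
    then show ?thesis by (simp add: D_def algebra_simps)
  qed
  have "continuous_on UNIV (D n)"
    using assms unfolding Cn_on_def D_def
    by (intro continuous_intros) (auto intro: continuous_on_compose2)
  with chain show "Cn_on n UNIV (\<lambda>x. c * f (a * x))"
    using Cn_on_UNIV_if_derivative_chain[of n D] by (simp add: D_def)
  show "(deriv ^^ m) (\<lambda>x. c * f (a * x)) = (\<lambda>x. c * a ^ m * (deriv ^^ m) f (a * x))"
    if "m \<le> n"
    using iterated_deriv_eq_derivative_chain[of n D, OF chain that] by (simp add: D_def)
qed

lemma at_0_within_atMost_nontrivial: "at (0::real) within {..0} \<noteq> bot"
proof -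
  have "at_left (0::real) \<le> at 0 within {..0}"
    by (rule at_le) auto
  then show ?thesis
    using trivial_limit_at_left_real[of 0] by (auto simp: bot_unique)
qed

lemma at_0_within_atLeast_nontrivial: "at (0::real) within {0..} \<noteq> bot"
proof -
  have "at_right (0::real) \<le> at 0 within {0..}"
    by (rule at_le) auto
  then show ?thesis
    using trivial_limit_at_right_real[of 0] by (auto simp: bot_unique)
qed

lemma has_real_derivative_splice_nonzero:
  assumes "(L has_real_derivative L') (at x)" "(R has_real_derivative R') (at x)" "x \<noteq> 0"
  shows "(splice L R has_real_derivative (if x < 0 then L' else R')) (at x)"
proof (cases "x < 0")
  case True
  then show ?thesis
    using has_field_derivative_transform_within_open[OF assms(1), of "{..<0}"]
    by (simp add: splice_def)
next
  case False
  with assms(3) show ?thesis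
    using has_field_derivative_transform_within_open[OF assms(2), of "{0<..}"]
    by (simp add: splice_def)
qed

lemma has_real_derivative_splice_left:
  assumes "(L has_real_derivative D) (at 0)"
  shows "(splice L R has_real_derivative D) (at 0 within {..0})"
  by (rule has_field_derivative_transform_within[OF has_field_derivative_at_within[OF assms], of 1])
     (auto simp: splice_def)

lemma has_real_derivative_splice_right:
  assumes "(R has_real_derivative D) (at 0)" "L 0 = R 0"
  shows "(splice L R has_real_derivative D) (at 0 within {0..})"
  by (rule has_field_derivative_transform_within[OF has_field_derivative_at_within[OF assms(1)], of 1])
     (use assms(2) in \<open>auto simp: splice_def\<close>)

lemma has_real_derivative_splice_zero:
  assumes "(L has_real_derivative D) (at 0)" "(R has_real_derivative D) (at 0)" "L 0 = R 0"
  shows "(splice L R has_real_derivative D) (at 0)"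
proof -
  have "((\<lambda>y. (splice L R y - splice L R 0) / (y - 0)) \<longlongrightarrow> D) (at 0 within {..0} \<union> {0..})"
    using has_real_derivative_splice_left[OF assms(1)]
      has_real_derivative_splice_right[where L = L, OF assms(2,3)]
    unfolding has_field_derivative_iff by (rule Lim_Un)
  moreover have "{..0} \<union> {0..} = (UNIV :: real set)" by auto
  ultimately show ?thesis unfolding has_field_derivative_iff by simp
qed

lemma has_real_derivative_splice:
  assumes "\<And>x. (L has_real_derivative L' x) (at x)" "\<And>x. (R has_real_derivative R' x) (at x)"
    and "L 0 = R 0" "L' 0 = R' 0"
  shows "(splice L R has_real_derivative splice L' R' x) (at x)"
proof (cases "x = 0")
  case True
  have "(R has_real_derivative L' 0) (at 0)"
    using assms(2)[of 0] assms(4) by simp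
  then have "(splice L R has_real_derivative L' 0) (at 0)"
    by (intro has_real_derivative_splice_zero assms(1,3))
  with True show ?thesis by (simp add: splice_def)
next
  case False
  then show ?thesis
    using has_real_derivative_splice_nonzero[OF assms(1,2) False]
    by (cases "x < 0") (simp_all add: splice_def)
qed

lemma has_real_derivative_splice_imp:
  assumes "\<And>x. (L has_real_derivative L' x) (at x)" "\<And>x. (R has_real_derivative R' x) (at x)"
    and "L 0 = R 0" and "\<And>x. (splice L R has_real_derivative S' x) (at x)"
  shows "S' = splice L' R' \<and> L' 0 = R' 0"
proof -
  have left: "S' 0 = L' 0"
    using has_field_derivative_unique[OF has_field_derivative_at_within[OF assms(4)]
        has_real_derivative_splice_left[OF assms(1)] at_0_within_atMost_nontrivial] .
  have right: "S' 0 = R' 0"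
    using has_field_derivative_unique[OF has_field_derivative_at_within[OF assms(4)]
        has_real_derivative_splice_right[where L = L, OF assms(2,3)] at_0_within_atLeast_nontrivial] .
  have "S' x = splice L' R' x" for x
  proof (cases "x = 0")
    case True
    with left show ?thesis by (simp add: splice_def)
  next
    case False
    with assms show ?thesis
      using DERIV_unique[OF assms(4) has_real_derivative_splice_nonzero[OF assms(1,2)]]
      by (simp add: splice_def)
  qed
  with left right show ?thesis by auto
qed

lemma continuous_on_splice:
  assumes "continuous_on UNIV L" "continuous_on UNIV R" "L 0 = R 0"
  shows "continuous_on UNIV (splice L R)"
proof -
  have "continuous_on {..0} (splice L R)"
    using continuous_on_subset[OF assms(1)] by (rule continuous_on_eq) (auto simp: splice_def)
  moreover have "continuous_on {0..} (splice L R)"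
    using continuous_on_subset[OF assms(2)]
    by (rule continuous_on_eq) (use assms(3) in \<open>auto simp: splice_def\<close>)
  moreover have "(UNIV :: real set) = {..0} \<union> {0..}" by auto
  ultimately show ?thesis
    by (metis closed_atLeast closed_atMost continuous_on_closed_Un)
qed

lemma Cn_on_splice_iff:
  assumes L: "Cn_on n UNIV L" and R: "Cn_on n UNIV R" and "L 0 = R 0"
  shows "Cn_on n UNIV (splice L R) \<longleftrightarrow> (\<forall>j\<le>n. (deriv ^^ j) L 0 = (deriv ^^ j) R 0)"
proof
  assume S: "Cn_on n UNIV (splice L R)"
  have "(deriv ^^ m) (splice L R) = splice ((deriv ^^ m) L) ((deriv ^^ m) R)
        \<and> (deriv ^^ m) L 0 = (deriv ^^ m) R 0" if "m \<le> n" for m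
    using that
  proof (induction m)
    case 0
    with assms(3) show ?case by simp
  next
    case (Suc m)
    then have "m < n" by simp
    with Suc.IH have IH: "(deriv ^^ m) (splice L R) = splice ((deriv ^^ m) L) ((deriv ^^ m) R)"
      and agree: "(deriv ^^ m) L 0 = (deriv ^^ m) R 0" by auto
    have "(splice ((deriv ^^ m) L) ((deriv ^^ m) R) has_real_derivative
          (deriv ^^ Suc m) (splice L R) x) (at x)" for x
      using Cn_on_UNIV_has_real_derivative[OF S \<open>m < n\<close>, of x] unfolding IH .
    then show ?case
      by (rule has_real_derivative_splice_imp[OF Cn_on_UNIV_has_real_derivative[OF L \<open>m < n\<close>]
            Cn_on_UNIV_has_real_derivative[OF R \<open>m < n\<close>] agree])
  qed
  then show "\<forall>j\<le>n. (deriv ^^ j) L 0 = (deriv ^^ j) R 0" by blast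
next
  assume agree: "\<forall>j\<le>n. (deriv ^^ j) L 0 = (deriv ^^ j) R 0"
  define Q where "Q m = splice ((deriv ^^ m) L) ((deriv ^^ m) R)" for m
  have "(Q m has_real_derivative Q (Suc m) x) (at x)" if "m < n" for m x
    unfolding Q_def using agree[rule_format, of m] agree[rule_format, of "Suc m"] that
    by (intro has_real_derivative_splice Cn_on_UNIV_has_real_derivative[OF L]
        Cn_on_UNIV_has_real_derivative[OF R]) auto
  moreover have "continuous_on UNIV (Q n)"
    using L R agree unfolding Q_def Cn_on_def by (intro continuous_on_splice) auto
  ultimately have "Cn_on n UNIV (Q 0)"
    by (rule Cn_on_UNIV_if_derivative_chain)
  then show "Cn_on n UNIV (splice L R)"
    by (simp add: Q_def)
qed

lemma Cn_on_splice_scaled_iff: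
  assumes "Cn_on n UNIV f" "f 0 = 0"
  shows "Cn_on n UNIV (splice (\<lambda>x. c * f x) (\<lambda>x. d * f (a * x)))
    \<longleftrightarrow> (\<forall>j\<le>n. c * (deriv ^^ j) f 0 = d * a ^ j * (deriv ^^ j) f 0)"
proof -
  have L: "Cn_on n UNIV (\<lambda>x. c * f x)"
    using Cn_on_UNIV_scaled[OF assms(1), where c = c and a = 1] by simp
  have R: "Cn_on n UNIV (\<lambda>x. d * f (a * x))"
    by (rule Cn_on_UNIV_scaled[OF assms(1)])
  have "Cn_on n UNIV (splice (\<lambda>x. c * f x) (\<lambda>x. d * f (a * x)))
    \<longleftrightarrow> (\<forall>j\<le>n. (deriv ^^ j) (\<lambda>x. c * f x) 0 = (deriv ^^ j) (\<lambda>x. d * f (a * x)) 0)"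
    by (rule Cn_on_splice_iff[OF L R]) (simp add: assms(2))
  also have "\<dots> \<longleftrightarrow> (\<forall>j\<le>n. c * (deriv ^^ j) f 0 = d * a ^ j * (deriv ^^ j) f 0)"
    using iterated_deriv_scaled[OF assms(1), where c = c and a = 1]
      iterated_deriv_scaled[OF assms(1), where c = d and a = a]
    by simp
  finally show ?thesis .
qed

lemma Cn_on_1_splice_scaled_iff:
  assumes "Cn_on 1 UNIV f" "f 0 = 0" "deriv f 0 \<noteq> 0"
  shows "Cn_on 1 UNIV (splice (\<lambda>x. c * f x) (\<lambda>x. d * f (a * x))) \<longleftrightarrow> c = d * a"
  using Cn_on_splice_scaled_iff[OF assms(1,2)] assms(2,3) by (auto simp: le_Suc_eq)

lemma Cn_on_splice_scaled_iff_higher_derivs_zero: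
  assumes "Cn_on n UNIV f" "f 0 = 0" "a > 0" "a \<noteq> 1" "d \<noteq> 0"
  shows "Cn_on n UNIV (splice (\<lambda>x. d * a * f x) (\<lambda>x. d * f (a * x)))
    \<longleftrightarrow> (\<forall>j\<in>{2..n}. (deriv ^^ j) f 0 = 0)"
proof -
  have "d * a * (deriv ^^ j) f 0 = d * a ^ j * (deriv ^^ j) f 0 \<longleftrightarrow> j < 2 \<or> (deriv ^^ j) f 0 = 0"
    for j
  proof (cases "j < 2")
    case True
    then have "j = 0 \<or> j = 1" by auto
    with assms(2) show ?thesis by auto
  next
    case False
    then have "a ^ j = a * a ^ (j - 1)"
      by (simp flip: power_Suc)
    moreover have "a ^ (j - 1) \<noteq> 1"
      using power_eq_1_iff[of a "j - 1"] False assms(3,4) by auto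
    ultimately have "d * a \<noteq> d * a ^ j"
      using assms(3,5) by simp
    with False show ?thesis by simp
  qed
  then show ?thesis
    unfolding Cn_on_splice_scaled_iff[OF assms(1,2)] by auto
qed

lemma sgn_eq_if_deriv_pos:
  fixes f :: "real \<Rightarrow> real"
  assumes "inj f" "continuous_on UNIV f" "f 0 = 0" "(f has_real_derivative l) (at 0)" "l > 0"
  shows "sgn (f x) = sgn x"
proof -
  have "strict_mono_on UNIV f \<or> strict_antimono_on UNIV f"
    using injective_eq_monotone_map[of UNIV f] assms(1,2) by simp
  moreover have "\<not> strict_antimono_on UNIV f"
  proof
    assume anti: "strict_antimono_on UNIV f"
    obtain d where "d > 0" "\<And>h. 0 < h \<Longrightarrow> h < d \<Longrightarrow> f 0 < f (0 + h)"
      using DERIV_pos_inc_right[OF assms(4,5)] by blast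
    then have "f 0 < f (d / 2)" by simp
    moreover have "f (d / 2) < f 0"
      using monotone_onD[OF anti, of 0 "d / 2"] \<open>d > 0\<close> by simp
    ultimately show False by simp
  qed
  ultimately have "strict_mono_on UNIV f" by blast
  then show ?thesis
    using strict_mono_onD[of UNIV f 0 x] strict_mono_onD[of UNIV f x 0] assms(3)
    by (cases x "0::real" rule: linorder_cases) auto
qed

lemma w_comp_sgn_preserving:
  assumes "a > 0" "\<And>x. sgn (f x) = sgn x"
  shows "w b \<circ> f \<circ> w a = splice f (\<lambda>x. b * f (a * x))"
proof
  fix x
  have sign: "f y \<le> 0 \<longleftrightarrow> y \<le> 0" for y
    using sgn_le_0_iff[of "f y"] sgn_le_0_iff[of y] assms(2)[of y] by argo
  show "(w b \<circ> f \<circ> w a) x = splice f (\<lambda>x. b * f (a * x)) x"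
  proof (cases "x \<le> 0")
    case True
    with sign[of x] show ?thesis by (simp add: w_def splice_def)
  next
    case False
    with assms(1) have "0 < a * x" by simp
    with sign[of "a * x"] False show ?thesis by (simp add: w_def splice_def)
  qed
qed

lemma w_comp_sgn_reversing:
  assumes "a > 0" "\<And>x. sgn (f x) = - sgn x"
  shows "w b \<circ> f \<circ> w a = splice (\<lambda>x. b * f x) (\<lambda>x. f (a * x))"
proof
  fix x
  have sign: "f y \<le> 0 \<longleftrightarrow> 0 \<le> y" for y
    using sgn_le_0_iff[of "f y"] zero_le_sgn_iff[of y] assms(2)[of y] by argo
  have "f 0 = 0"
    using assms(2)[of 0] by (simp add: sgn_0_0)
  show "(w b \<circ> f \<circ> w a) x = splice (\<lambda>x. b * f x) (\<lambda>x. f (a * x)) x"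
  proof (cases "x < 0")
    case True
    with sign[of x] show ?thesis by (simp add: w_def splice_def)
  next
    case False
    with assms(1) have "0 \<le> a * x" by simp
    with sign[of "a * x"] \<open>f 0 = 0\<close> False show ?thesis
      by (cases "x = 0") (simp_all add: w_def splice_def)
  qed
qed

lemma Ck_on_UNIV_has_real_derivative:
  assumes "Ck_on k UNIV f" "k \<ge> 1"
  shows "(f has_real_derivative deriv f x) (at x)"
  using assms unfolding Ck_on_def Cn_on_def by (auto simp: one_enat_def)

lemma Dk0_Cn_on: "f \<in> Dk0 k \<Longrightarrow> enat n \<le> k \<Longrightarrow> Cn_on n UNIV f"
  by (auto simp: Dk0_def Ck_on_def)

lemma Dk0_deriv_nonzero:
  assumes "f \<in> Dk0 k" "k \<ge> 1"
  shows "deriv f 0 \<noteq> 0"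
proof -
  obtain g where "homeomorphism UNIV UNIV f g" "Ck_on k UNIV f" "Ck_on k UNIV g"
    using assms(1) unfolding Dk0_def by auto
  then have "((\<lambda>x. g (f x)) has_real_derivative deriv g (f 0) * deriv f 0) (at 0)"
    using DERIV_chain2 Ck_on_UNIV_has_real_derivative assms(2) by blast
  moreover have "(\<lambda>x. g (f x)) = (\<lambda>x. x)"
    using \<open>homeomorphism UNIV UNIV f g\<close> unfolding homeomorphism_def by auto
  ultimately have "deriv g (f 0) * deriv f 0 = 1"
    using DERIV_ident DERIV_unique by metis
  then show ?thesis by auto
qed

lemma Dk0_sgn:
  assumes "f \<in> Dk0 k" "k \<ge> 1"
  shows Dk0_sgn_if_deriv_pos: "deriv f 0 > 0 \<Longrightarrow> sgn (f x) = sgn x"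
    and Dk0_sgn_if_deriv_neg: "deriv f 0 < 0 \<Longrightarrow> sgn (f x) = - sgn x"
proof -
  obtain g where f0: "f 0 = 0" and hom: "homeomorphism UNIV UNIV f g"
    and f': "(f has_real_derivative deriv f 0) (at 0)"
    using assms Ck_on_UNIV_has_real_derivative unfolding Dk0_def by blast
  have inj: "inj f" and cont: "continuous_on UNIV f"
    using hom by (auto simp: homeomorphism_def intro: inj_on_inverseI)
  show "sgn (f x) = sgn x" if "deriv f 0 > 0"
    by (rule sgn_eq_if_deriv_pos[OF inj cont f0 f' that])
  have "inj (\<lambda>x. - f x)"
    using inj by (simp add: inj_def)
  moreover have "continuous_on UNIV (\<lambda>x. - f x)"
    using cont by (rule continuous_on_minus)
  ultimately have "sgn (- f x) = sgn x" if "deriv f 0 < 0"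
    using sgn_eq_if_deriv_pos[OF _ _ _ DERIV_minus[OF f']] f0 that by simp
  then show "sgn (f x) = - sgn x" if "deriv f 0 < 0"
    using that by (simp add: sgn_minus)
qed

theorem lemma5p16:
  fixes k :: enat and a b :: real and f q :: "real \<Rightarrow> real"
  assumes "k \<ge> 1"
    and "a > 0" and "b > 0"
    and "f \<in> Dk0 k"
    and "q = w b \<circ> f \<circ> w a"
  shows "(deriv f 0 > 0 \<longrightarrow> (Cn_on 1 UNIV q \<longleftrightarrow> a = 1 / b))
       \<and> (deriv f 0 < 0 \<longrightarrow> (Cn_on 1 UNIV q \<longleftrightarrow> a = b))
       \<and> (Cn_on 1 UNIV q \<and> a \<noteq> 1 \<and> b \<noteq> 1 \<longrightarrow>
            (\<forall>n::nat. 2 \<le> n \<and> enat n \<le> k \<longrightarrow>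
               (Cn_on n UNIV q \<longleftrightarrow> (\<forall>j\<in>{2..n}. (deriv ^^ j) f 0 = 0))))"
proof -
  have f0: "f 0 = 0" and C1: "Cn_on 1 UNIV f" and f'0: "deriv f 0 \<noteq> 0"
    using assms(1,4) Dk0_Cn_on[of f k 1] Dk0_deriv_nonzero by (auto simp: Dk0_def one_enat_def)
  have pos: "q = splice f (\<lambda>x. b * f (a * x))" if "deriv f 0 > 0"
    unfolding assms(5) using assms(2) Dk0_sgn_if_deriv_pos[OF assms(4,1) that]
    by (rule w_comp_sgn_preserving)
  have neg: "q = splice (\<lambda>x. b * f x) (\<lambda>x. f (a * x))" if "deriv f 0 < 0"
    unfolding assms(5) using assms(2) Dk0_sgn_if_deriv_neg[OF assms(4,1) that]
    by (rule w_comp_sgn_reversing)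
  have part_a: "Cn_on 1 UNIV q \<longleftrightarrow> b * a = 1" if "deriv f 0 > 0"
    using Cn_on_1_splice_scaled_iff[OF C1 f0 f'0, of 1 b a] pos[OF that] by auto
  have part_b: "Cn_on 1 UNIV q \<longleftrightarrow> a = b" if "deriv f 0 < 0"
    using Cn_on_1_splice_scaled_iff[OF C1 f0 f'0, of b 1 a] neg[OF that] by auto
  have part_c: "Cn_on n UNIV q \<longleftrightarrow> (\<forall>j\<in>{2..n}. (deriv ^^ j) f 0 = 0)"
    if "Cn_on 1 UNIV q" "a \<noteq> 1" "b \<noteq> 1" "enat n \<le> k" for n
  proof -
    note Cn = Dk0_Cn_on[OF assms(4) that(4)]
    show ?thesis
    proof (cases "deriv f 0 > 0")
      case True
      with part_a that(1) pos have "q = splice (\<lambda>x. b * a * f x) (\<lambda>x. b * f (a * x))"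
        by simp
      with assms(3) show ?thesis
        using Cn_on_splice_scaled_iff_higher_derivs_zero[OF Cn f0 assms(2) that(2)] by simp
    next
      case False
      with f'0 part_b that(1) neg have "q = splice (\<lambda>x. a * f x) (\<lambda>x. f (a * x))"
        by simp
      with that(3) show ?thesis
        using Cn_on_splice_scaled_iff_higher_derivs_zero[OF Cn f0 assms(2) that(2), of 1] by simp
    qed
  qed
  show ?thesis
    using part_a part_b part_c assms(3) by (auto simp: field_simps)
qed

end
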